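(* Let $(q_{i,j})_{i,j\in\mathbb Z^{\geq 0}}$ be the infinite array of non-negative integers defined greedily (row by row, and within each row by increasing $j$) by $$q_{i,j}=\operatorname{mex}\Big(\{q_{i,k}+q_{l,j}-q_{l,k}\mid 0\leq l<i,\ 0\leq k<j\}\cap\mathbb Z^{\geq 0}\Big),$$ and let $q_j=q_{2,j}$. Then the sequence $(q_j)_{j\in\mathbb Z^{\geq 0}}$ is a permutation of $\mathbb Z^{\geq 0}$, and every integer appears exactly once in the sequence $(q_j-j)_{j\in\mathbb Z^{\geq 0}}$.
   Context: $\mathbb Z^{\geq 0}=\{0,1,2,\dots\}$. For $X\subseteq\mathbb Z^{\ge0}$, $\operatorname{mex}(X)=\min(\mathbb Z^{\geq 0}\setminus X)$, with $\operatorname{mex}(\emptyset)=0$. (Row $0$ of the array is identically $0$ and row $1$ is $q_{1,j}=j$.) *)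

theory Defs
  imports Main
begin

definition mex :: "nat set \<Rightarrow> nat" where
  "mex X = (LEAST n. n \<notin> X)"

function qarr :: "nat \<Rightarrow> nat \<Rightarrow> nat" where
  "qarr i j = mex (nat ` ({x. 0 \<le> x} \<inter>
      (\<Union>l\<in>{..<i}. (\<lambda>k. int (qarr i k) + int (qarr l j) - int (qarr l k)) ` {..<j})))"
  by pat_completeness auto
termination
  by (relation "measure (\<lambda>(i,j). i + j)") auto

end

theory Submission
  imports Defs
begin

text \<open>Row 2 satisfies \<open>q\<^sub>j = mex ({q\<^sub>k | k < j} \<union> {q\<^sub>k + j - k | k < j})\<close>, so every new
  value avoids all earlier values and every new difference \<open>q\<^sub>j - j\<close> avoids all earlier
  differences; this gives both injectivities. For surjectivity, after step \<open>n\<close> the differences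
  \<open>q\<^sub>k - k\<close> (\<open>k \<le> n\<close>) fill an interval \<open>[-a, b]\<close> with \<open>a + b = n\<close>, and every value below \<open>b\<close>
  has occurred. The candidates \<open>q\<^sub>k + n + 1 - k\<close> are then exactly \<open>b+1, \<dots>, a+2b+1\<close>, so
  \<open>q\<^sub>n\<^sub>+\<^sub>1\<close> is \<open>b\<close> if \<open>b\<close> is still free (the interval grows to the left) and \<open>a+2b+2\<close>
  otherwise (it grows to the right). The right end grows at least every second step. If the
  left end stalled at \<open>a\<close> from some point on, all later values would be \<open>a+2b+2\<close>, of the
  parity of \<open>a\<close>, while the right end \<open>b = n - a\<close> must be hit by some value at every step:
  impossible once \<open>n\<close> is odd and large.\<close>

lemma mex_eqI:
  assumes "m \<notin> X" and "\<And>v. v < m \<Longrightarrow> v \<in> X"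
  shows "mex X = m"
  unfolding mex_def using assms by (metis Least_equality not_le)

lemma mex_notin:
  assumes "finite X"
  shows "mex X \<notin> X"
proof -
  obtain n :: nat where "n \<notin> X"
    using ex_new_if_finite[OF infinite_UNIV_nat assms] by blast
  then show ?thesis unfolding mex_def by (rule LeastI)
qed

lemma nat_image_nonneg_int_image: "nat ` ({x. 0 \<le> x} \<inter> int ` S) = S"
proof -
  have "{x. 0 \<le> x} \<inter> int ` S = int ` S"
    by auto
  then show ?thesis
    by (simp add: image_image)
qed

declare qarr.simps[simp del]

lemma qarr_row0: "qarr 0 j = 0"
  by (subst qarr.simps) (auto intro: mex_eqI)

lemma qarr_row1: "qarr 1 j = j"
proof (induction j rule: less_induct)
  case (less j)
  have "(\<Union>l\<in>{..<1::nat}. (\<lambda>k. int (qarr 1 k) + int (qarr l j) - int (qarr l k)) ` {..<j})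
      = int ` {..<j}"
    using less by (auto simp: qarr_row0)
  then have "qarr 1 j = mex (nat ` ({x. 0 \<le> x} \<inter> int ` {..<j}))"
    by (subst qarr.simps) (simp only:)
  also have "\<dots> = mex {..<j}"
    by (simp only: nat_image_nonneg_int_image)
  also have "\<dots> = j"
    by (rule mex_eqI) auto
  finally show ?case .
qed

definition qseq :: "nat \<Rightarrow> nat" where
  "qseq j = qarr 2 j"

definition qdiff :: "nat \<Rightarrow> int" where
  "qdiff j = int (qseq j) - int j"

lemma qseq_rec: "qseq j = mex (qseq ` {..<j} \<union> (\<lambda>k. qseq k + j - k) ` {..<j})"
proof -
  have rows: "{..<2::nat} = {0, 1}" "qarr (Suc 0) i = i" for i
    using qarr_row1[of i] by auto
  have "int ` ((\<lambda>k. qseq k + j - k) ` {..<j}) = (\<lambda>k. int (qseq k) + int j - int k) ` {..<j}"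
    unfolding image_image by (rule image_cong) (auto simp: of_nat_diff)
  then have "(\<Union>l\<in>{..<2::nat}. (\<lambda>k. int (qarr 2 k) + int (qarr l j) - int (qarr l k)) ` {..<j})
      = int ` (qseq ` {..<j} \<union> (\<lambda>k. qseq k + j - k) ` {..<j})"
    unfolding rows(1) image_Un by (simp add: qarr_row0 rows(2) image_image qseq_def[symmetric])
  then show ?thesis
    unfolding qseq_def[of j] by (subst qarr.simps) (simp only: nat_image_nonneg_int_image)
qed

lemma qseq_avoids:
  assumes "k < j"
  shows "qseq j \<noteq> qseq k" and "qdiff j \<noteq> qdiff k"
proof -
  have "qseq j \<notin> qseq ` {..<j} \<union> (\<lambda>k. qseq k + j - k) ` {..<j}"
    by (subst qseq_rec) (rule mex_notin, simp)
  then have "qseq j \<noteq> qseq k" "qseq j \<noteq> qseq k + j - k"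
    using assms by auto
  then show "qseq j \<noteq> qseq k" and "qdiff j \<noteq> qdiff k"
    using assms unfolding qdiff_def by linarith+
qed

lemma inj_qseq: "inj qseq"
  by (metis injI linorder_neqE qseq_avoids(1))

lemma inj_qdiff: "inj qdiff"
  by (metis injI linorder_neqE qseq_avoids(2))

definition qstate :: "nat \<Rightarrow> nat \<Rightarrow> nat \<Rightarrow> bool" where
  "qstate n a b \<longleftrightarrow>
     n = a + b \<and> qdiff ` {..n} = {- int a..int b} \<and> {..<b} \<subseteq> qseq ` {..n}"

lemma qstate_0: "qstate 0 0 0"
proof -
  have "qseq 0 = 0"
    using qseq_rec[of 0] by (simp add: mex_eqI)
  then show ?thesis
    by (simp add: qstate_def qdiff_def)
qed

lemma qdiff_mem_if_qstate:
  assumes "qstate n a b" and "k \<le> n"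
  shows "- int a \<le> qdiff k" and "qdiff k \<le> int b"
  using assms unfolding qstate_def by (metis atLeastAtMost_iff atMost_iff image_eqI)+

lemma qseq_le_if_qstate:
  assumes "qstate n a b" and "k \<le> n"
  shows "qseq k \<le> a + 2 * b"
  using qdiff_mem_if_qstate[OF assms] assms unfolding qstate_def qdiff_def by linarith

lemma qseq_shifted_image_if_qstate:
  assumes st: "qstate n a b"
  shows "(\<lambda>k. qseq k + Suc n - k) ` {..n} = {b + 1..a + 2 * b + 1}"
proof -
  have n: "n = a + b" and D: "qdiff ` {..n} = {- int a..int b}"
    using st unfolding qstate_def by auto
  have shift: "int (qseq k + Suc n - k) = qdiff k + int (Suc n)" if "k \<le> n" for k
    using that unfolding qdiff_def by (simp add: of_nat_diff)
  show ?thesis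
  proof (intro equalityI subsetI)
    fix v assume "v \<in> (\<lambda>k. qseq k + Suc n - k) ` {..n}"
    then obtain k where "k \<le> n" and "v = qseq k + Suc n - k"
      by auto
    then show "v \<in> {b + 1..a + 2 * b + 1}"
      using shift[of k] qdiff_mem_if_qstate[OF st, of k] n by auto
  next
    fix v assume "v \<in> {b + 1..a + 2 * b + 1}"
    then have "int v - int (Suc n) \<in> qdiff ` {..n}"
      unfolding D using n by auto
    then obtain k where "k \<le> n" and "qdiff k = int v - int (Suc n)"
      by (metis atMost_iff imageE)
    then show "v \<in> (\<lambda>k. qseq k + Suc n - k) ` {..n}"
      using shift[of k] by (intro image_eqI[where x = k]) auto
  qed
qed

lemma qseq_Suc_if_qstate:
  assumes "qstate n a b"
  shows "qseq (Suc n) = mex (qseq ` {..n} \<union> {b + 1..a + 2 * b + 1})"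
  using qseq_rec[of "Suc n"] unfolding lessThan_Suc_atMost qseq_shifted_image_if_qstate[OF assms] .

lemma qstate_Suc_fresh:
  assumes st: "qstate n a b" and fresh: "b \<notin> qseq ` {..n}"
  shows "qseq (Suc n) = b" and "qstate (Suc n) (Suc a) b"
proof -
  show q: "qseq (Suc n) = b"
    unfolding qseq_Suc_if_qstate[OF st]
    using st fresh unfolding qstate_def by (intro mex_eqI) auto
  have "insert (qdiff (Suc n)) {- int a..int b} = {- int (Suc a)..int b}"
    using st q unfolding qstate_def qdiff_def by auto
  then show "qstate (Suc n) (Suc a) b"
    using st unfolding qstate_def by (auto simp: atMost_Suc)
qed

lemma qstate_Suc_taken:
  assumes st: "qstate n a b" and taken: "b \<in> qseq ` {..n}"
  shows "qseq (Suc n) = a + 2 * b + 2" and "qstate (Suc n) a (Suc b)"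
proof -
  have "a + 2 * b + 2 \<notin> qseq ` {..n}"
    using qseq_le_if_qstate[OF st] by fastforce
  moreover have "v \<in> qseq ` {..n} \<union> {b + 1..a + 2 * b + 1}" if "v < a + 2 * b + 2" for v
    using st taken that unfolding qstate_def by (cases "v < b") (auto simp: not_less le_eq_less_or_eq)
  ultimately show q: "qseq (Suc n) = a + 2 * b + 2"
    unfolding qseq_Suc_if_qstate[OF st] by (intro mex_eqI) auto
  have "insert (qdiff (Suc n)) {- int a..int b} = {- int a..int (Suc b)}"
    using st q unfolding qstate_def qdiff_def by auto
  then show "qstate (Suc n) a (Suc b)"
    using st taken unfolding qstate_def by (auto simp: atMost_Suc lessThan_Suc)
qed

primrec qhi :: "nat \<Rightarrow> nat" where
  "qhi 0 = 0"
| "qhi (Suc n) = (if qhi n \<in> qseq ` {..n} then Suc (qhi n) else qhi n)"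

definition qlo :: "nat \<Rightarrow> nat" where
  "qlo n = n - qhi n"

lemma qhi_le: "qhi n \<le> n"
  by (induction n) auto

lemma qlo_Suc: "qlo (Suc n) = (if qhi n \<in> qseq ` {..n} then qlo n else Suc (qlo n))"
  using qhi_le[of n] by (simp add: qlo_def Suc_diff_le)

lemma qstate_qlo_qhi: "qstate n (qlo n) (qhi n)"
proof (induction n)
  case 0
  show ?case
    using qstate_0 by (simp add: qlo_def)
next
  case (Suc n)
  show ?case
    using qstate_Suc_fresh(2)[OF Suc] qstate_Suc_taken(2)[OF Suc] by (simp add: qlo_Suc)
qed

lemma qhi_Suc_Suc: "Suc (qhi n) \<le> qhi (Suc (Suc n))"
proof (cases "qhi n \<in> qseq ` {..n}")
  case True
  then show ?thesis
    by simp
next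
  case False
  then have "qseq (Suc n) = qhi n"
    using qstate_Suc_fresh(1)[OF qstate_qlo_qhi] by blast
  then have "qhi (Suc n) = qseq (Suc n)"
    using False by simp
  then have "qhi (Suc n) \<in> qseq ` {..Suc n}"
    by (metis atMost_iff image_eqI order_refl)
  then show ?thesis
    using False by simp
qed

lemma qhi_unbounded: "k \<le> qhi (2 * k)"
proof (induction k)
  case (Suc k)
  then show ?case
    using qhi_Suc_Suc[of "2 * k"] by simp
qed simp

lemma qlo_mono: "mono qlo"
  by (rule monoI, rule lift_Suc_mono_le) (auto simp: qlo_Suc)

lemma qlo_increases: "\<exists>m. qlo n < qlo m"
proof (rule ccontr)
  assume "\<nexists>m. qlo n < qlo m"
  then have const: "qlo m = qlo n" if "n \<le> m" for m
    using monoD[OF qlo_mono that] by (meson antisym not_le)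
  define a where "a = qlo n"
  have taken: "qhi m \<in> qseq ` {..m}" if "n \<le> m" for m
    using const[of m] const[of "Suc m"] that by (auto simp: qlo_Suc split: if_splits)
  have later: "qseq (Suc m) = a + 2 * qhi m + 2" if "n \<le> m" for m
    using qstate_Suc_taken(1)[OF qstate_qlo_qhi taken[OF that]] const[OF that] by (simp add: a_def)
  \<comment> \<open>\<open>qhi m = 2n + a + 1\<close> exceeds every value up to step \<open>n\<close> and has the parity opposite to \<open>a\<close>\<close>
  define m where "m = 2 * (n + a) + 1"
  have "n \<le> m"
    by (simp add: m_def)
  then have hi_m: "qhi m + a = m"
    using qstate_qlo_qhi[of m] const[OF \<open>n \<le> m\<close>] unfolding qstate_def a_def by simp
  obtain k where "k \<le> m" and k: "qseq k = qhi m"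
    using taken[OF \<open>n \<le> m\<close>] by (metis atMost_iff imageE)
  show False
  proof (cases "k \<le> n")
    case True
    have "qseq k \<le> a + 2 * qhi n"
      using qseq_le_if_qstate[OF qstate_qlo_qhi True] by (simp add: a_def)
    then show False
      using k hi_m qhi_le[of n] m_def by arith
  next
    case False
    then obtain k' where "k = Suc k'" and "n \<le> k'"
      by (cases k) auto
    then have "qhi m + a = 2 * (a + qhi k' + 1)"
      using later[of k'] k by simp
    then show False
      using hi_m m_def by presburger
  qed
qed

lemma qlo_unbounded: "\<exists>m. k \<le> qlo m"
proof (induction k)
  case (Suc k)
  then obtain m where "k \<le> qlo m"
    by blast
  moreover obtain m' where "qlo m < qlo m'"
    using qlo_increases by blast
  ultimately show ?case
    by (intro exI[of _ m']) simp
qed simp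

lemma surj_qseq: "surj qseq"
proof -
  have "v \<in> qseq ` {..2 * Suc v}" for v
    using qhi_unbounded[of "Suc v"] qstate_qlo_qhi[of "2 * Suc v"] unfolding qstate_def by auto
  then show ?thesis
    by blast
qed

lemma surj_qdiff: "surj qdiff"
proof -
  have "z \<in> qdiff ` {..m}" if "- int (qlo m) \<le> z" and "z \<le> int (qhi m)" for z m
    using that qstate_qlo_qhi[of m] unfolding qstate_def by simp
  moreover have "\<exists>m. - int (qlo m) \<le> z \<and> z \<le> int (qhi m)" for z
  proof (cases "0 \<le> z")
    case True
    then show ?thesis
      using qhi_unbounded[of "nat z"] by (intro exI[of _ "2 * nat z"]) linarith
  next
    case False
    obtain m where "nat (- z) \<le> qlo m"
      using qlo_unbounded by blast
    then show ?thesis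
      using False by (intro exI[of _ m]) linarith
  qed
  ultimately show ?thesis
    by blast
qed

theorem theorem5p1:
  shows "bij (\<lambda>j. qarr 2 j) \<and> (\<forall>z::int. \<exists>!j::nat. int (qarr 2 j) - int j = z)"
proof -
  have "bij qseq" and "bij qdiff"
    by (simp_all add: bij_def inj_qseq surj_qseq inj_qdiff surj_qdiff)
  then show ?thesis
    unfolding bij_iff[of qdiff] qdiff_def qseq_def[abs_def] by simp
qed

end
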